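(* For $3\le n\le m$ and $2\le 2r<n$, there exists a set $S\subset\mathrm{GF}(q^m)^n$ with rank diameter $2r$ such that $|S|>V_r(q^m,n)$.
   Context: The rank $\mathrm{rk}(\mathbf x)$ of $\mathbf x\in\mathrm{GF}(q^m)^n$ is the maximum number of its coordinates linearly independent over $\mathrm{GF}(q)$, and $d_{\mathrm R}(\mathbf x,\mathbf y)=\mathrm{rk}(\mathbf x-\mathbf y)$. The diameter of a set is the maximum rank distance between two of its elements. $V_r(q^m,n)$ is the number of vectors of $\mathrm{GF}(q^m)^n$ within rank distance $r$ of a fixed vector, i.e. $V_r(q^m,n)=\sum_{u=0}^r {n\brack u}\alpha(m,u)$ with $\alpha(m,0)=1$, $\alpha(m,u)=\prod_{i=0}^{u-1}(q^m-q^i)$ and ${n\brack u}=\alpha(n,u)/\alpha(u,u)$ the Gaussian binomial. *)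

theory Defs
  imports Main
begin

text \<open>K is a subfield of the (finite) field type 'a; it plays the role of GF(q),
  while the whole type 'a plays the role of GF(q^m).\<close>
definition subfield :: "'a::field set \<Rightarrow> bool" where
  "subfield K \<longleftrightarrow> 0 \<in> K \<and> 1 \<in> K \<and>
     (\<forall>a\<in>K. \<forall>b\<in>K. a + b \<in> K \<and> a * b \<in> K) \<and>
     (\<forall>a\<in>K. - a \<in> K \<and> inverse a \<in> K)"

definition vecs :: "nat \<Rightarrow> (nat \<Rightarrow> 'a::zero) set" where
  "vecs n = {x. \<forall>i. n \<le> i \<longrightarrow> x i = 0}"

definition lin_indep_over :: "'a::field set \<Rightarrow> (nat \<Rightarrow> 'a) \<Rightarrow> nat set \<Rightarrow> bool" where
  "lin_indep_over K x I \<longleftrightarrow>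
     (\<forall>c. (\<forall>i\<in>I. c i \<in> K) \<and> (\<Sum>i\<in>I. c i * x i) = 0 \<longrightarrow> (\<forall>i\<in>I. c i = 0))"

definition rk :: "'a::field set \<Rightarrow> nat \<Rightarrow> (nat \<Rightarrow> 'a) \<Rightarrow> nat" where
  "rk K n x = Max {card I | I. I \<subseteq> {..<n} \<and> lin_indep_over K x I}"

definition rank_dist :: "'a::field set \<Rightarrow> nat \<Rightarrow> (nat \<Rightarrow> 'a) \<Rightarrow> (nat \<Rightarrow> 'a) \<Rightarrow> nat" where
  "rank_dist K n x y = rk K n (\<lambda>i. x i - y i)"

definition rank_diameter :: "'a::field set \<Rightarrow> nat \<Rightarrow> (nat \<Rightarrow> 'a) set \<Rightarrow> nat" where
  "rank_diameter K n S = Max {rank_dist K n x y | x y. x \<in> S \<and> y \<in> S}"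

definition alpha :: "nat \<Rightarrow> nat \<Rightarrow> nat \<Rightarrow> nat" where
  "alpha q m u = (\<Prod>i<u. (q ^ m - q ^ i))"

definition gauss_binom :: "nat \<Rightarrow> nat \<Rightarrow> nat \<Rightarrow> nat" where
  "gauss_binom q n u = alpha q n u div alpha q u u"

definition ball_vol :: "nat \<Rightarrow> nat \<Rightarrow> nat \<Rightarrow> nat \<Rightarrow> nat" where
  "ball_vol q m n r = (\<Sum>u\<le>r. gauss_binom q n u * alpha q m u)"

end

theory Submission
  imports Defs "HOL-Library.FuncSet"
begin

text \<open>Take S to be the set of all vectors supported on the first 2r coordinates, so that
  |S| = q^(2rm). Every difference of two elements of S is again supported there, so has rank
  at most 2r; since 2r \<le> m, there are 2r elements of GF(q^m) linearly independent over GF(q),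
  and the vector having them as its first coordinates has rank exactly 2r, so S has diameter 2r.
  Finally V_r < q^(2rm): the Gaussian binomial is at most q^(u(n+1-u)) and alpha(m,u) \<le> q^(mu),
  so the u-th summand of V_r is at most q^(u(2m+1-u)); these exponents increase with u, whence
  V_r \<le> 2 q^(r(2m+1-r)) < q^(2rm) as soon as r \<ge> 2, and the case r = 1 is checked directly.\<close>

lemma subfield_card_ge_2:
  assumes "subfield K" and "finite K"
  shows "2 \<le> card K"
proof -
  have "{0, 1} \<subseteq> K" using assms(1) unfolding subfield_def by auto
  from card_mono[OF assms(2) this] show ?thesis by simp
qed

lemma subfield_uminus: "subfield K \<Longrightarrow> a \<in> K \<Longrightarrow> - a \<in> K"
  and subfield_inverse: "subfield K \<Longrightarrow> a \<in> K \<Longrightarrow> inverse a \<in> K"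
  and subfield_mult: "subfield K \<Longrightarrow> a \<in> K \<Longrightarrow> b \<in> K \<Longrightarrow> a * b \<in> K"
  by (simp_all add: subfield_def)

lemma vecs_mono: "k \<le> n \<Longrightarrow> vecs k \<subseteq> vecs n"
  by (auto simp: vecs_def)

lemma diff_in_vecs:
  fixes x y :: "nat \<Rightarrow> 'a::group_add"
  shows "x \<in> vecs k \<Longrightarrow> y \<in> vecs k \<Longrightarrow> (\<lambda>i. x i - y i) \<in> vecs k"
  by (simp add: vecs_def)

lemma card_vecs:
  assumes "finite (UNIV :: 'a set)"
  shows "card (vecs k :: (nat \<Rightarrow> 'a::zero) set) = card (UNIV :: 'a set) ^ k"
proof -
  define pad :: "(nat \<Rightarrow> 'a) \<Rightarrow> nat \<Rightarrow> 'a" where "pad f i = (if i < k then f i else 0)" for f i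
  have "bij_betw (\<lambda>x. restrict x {..<k}) (vecs k) (PiE {..<k} (\<lambda>_. UNIV :: 'a set))"
  proof (rule bij_betw_byWitness[where f' = pad])
    show "\<forall>x\<in>vecs k. pad (restrict x {..<k}) = x"
      by (auto simp: vecs_def pad_def fun_eq_iff not_less)
    show "\<forall>f\<in>PiE {..<k} (\<lambda>_. UNIV). restrict (pad f) {..<k} = f"
    proof
      fix f :: "nat \<Rightarrow> 'a" assume "f \<in> PiE {..<k} (\<lambda>_. UNIV)"
      then have "restrict (pad f) {..<k} = restrict f {..<k}" by (intro restrict_ext) (simp add: pad_def)
      with \<open>f \<in> PiE {..<k} (\<lambda>_. UNIV)\<close> show "restrict (pad f) {..<k} = f" by simp
    qed
    show "pad ` PiE {..<k} (\<lambda>_. UNIV) \<subseteq> vecs k"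
      by (simp add: vecs_def pad_def image_subset_iff)
    show "(\<lambda>x. restrict x {..<k}) ` vecs k \<subseteq> PiE {..<k} (\<lambda>_. UNIV)"
      by (simp add: image_subset_iff)
  qed
  then show ?thesis by (simp add: bij_betw_same_card card_PiE)
qed

lemma rk_candidates_finite: "finite {card I | I. I \<subseteq> {..<n} \<and> lin_indep_over K x I}"
proof -
  have "{card I | I. I \<subseteq> {..<n} \<and> lin_indep_over K x I} \<subseteq> card ` Pow {..<n}" by blast
  then show ?thesis by (rule finite_subset) simp
qed

lemma card_le_rk: "I \<subseteq> {..<n} \<Longrightarrow> lin_indep_over K x I \<Longrightarrow> card I \<le> rk K n x"
  unfolding rk_def by (rule Max_ge[OF rk_candidates_finite]) blast

lemma lin_indep_over_nonzero:
  assumes "subfield K" and "lin_indep_over K x I" and "i \<in> I"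
  shows "x i \<noteq> 0"
proof
  assume "x i = 0"
  define c :: "nat \<Rightarrow> 'a" where "c j = (if j = i then 1 else 0)" for j
  have "\<forall>j\<in>I. c j \<in> K" using assms(1) by (simp add: subfield_def c_def)
  moreover have "(\<Sum>j\<in>I. c j * x j) = 0" by (rule sum.neutral) (simp add: c_def \<open>x i = 0\<close>)
  ultimately have "c i = 0" using assms(2,3) unfolding lin_indep_over_def by blast
  then show False by (simp add: c_def)
qed

lemma rk_le_support:
  assumes "subfield K" and "x \<in> vecs k"
  shows "rk K n x \<le> k"
  unfolding rk_def
proof (rule Max.boundedI[OF rk_candidates_finite])
  show "{card I | I. I \<subseteq> {..<n} \<and> lin_indep_over K x I} \<noteq> {}"
  proof -
    have "card {} \<in> {card I | I. I \<subseteq> {..<n} \<and> lin_indep_over K x I}"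
      by (rule CollectI, rule exI[of _ "{}"]) (simp add: lin_indep_over_def)
    then show ?thesis by blast
  qed
next
  fix a assume "a \<in> {card I | I. I \<subseteq> {..<n} \<and> lin_indep_over K x I}"
  then obtain I where a: "a = card I" and I: "lin_indep_over K x I" by blast
  have "I \<subseteq> {..<k}"
  proof
    fix i assume "i \<in> I"
    then have "x i \<noteq> 0" by (rule lin_indep_over_nonzero[OF assms(1) I])
    with assms(2) show "i \<in> {..<k}" by (simp add: vecs_def) (meson not_le)
  qed
  then have "card I \<le> card {..<k}" by (rule card_mono[rotated]) simp
  then show "a \<le> k" by (simp add: a)
qed

lemma rank_diameter_vecs:
  assumes K: "subfield K" and "k \<le> n" and e: "lin_indep_over K e {..<k}"
  shows "rank_diameter K n (vecs k) = k"
  unfolding rank_diameter_def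
proof (rule Max_eqI)
  let ?D = "{rank_dist K n x y | x y. x \<in> vecs k \<and> y \<in> vecs k}"
  show bounded: "d \<le> k" if "d \<in> ?D" for d
  proof -
    from that obtain x y where "d = rank_dist K n x y" "x \<in> vecs k" "y \<in> vecs k" by blast
    then show ?thesis unfolding rank_dist_def by (simp add: rk_le_support[OF K diff_in_vecs])
  qed
  then have "?D \<subseteq> {..k}" by blast
  then show "finite ?D" by (rule finite_subset) simp
  define x where "x i = (if i < k then e i else 0)" for i
  have "x \<in> vecs k" by (simp add: vecs_def x_def)
  moreover have "(\<lambda>_. 0) \<in> vecs k" by (simp add: vecs_def)
  ultimately have x_in: "rank_dist K n x (\<lambda>_. 0) \<in> ?D" by blast
  have "(\<Sum>i<k. c i * x i) = (\<Sum>i<k. c i * e i)" for c by (simp add: x_def)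
  then have "lin_indep_over K x {..<k}"
    using e by (simp add: lin_indep_over_def)
  then have "k \<le> rank_dist K n x (\<lambda>_. 0)"
    using card_le_rk[of "{..<k}" n] assms(2) by (simp add: rank_dist_def)
  with bounded[OF x_in] have "rank_dist K n x (\<lambda>_. 0) = k" by (rule antisym)
  with x_in show "k \<in> ?D" by simp
qed

definition span_over :: "'a::field set \<Rightarrow> (nat \<Rightarrow> 'a) \<Rightarrow> nat \<Rightarrow> 'a set" where
  "span_over K e k = (\<lambda>c. \<Sum>i<k. c i * e i) ` PiE {..<k} (\<lambda>_. K)"

lemma card_span_over_le: "finite K \<Longrightarrow> card (span_over K e k) \<le> card K ^ k"
  unfolding span_over_def by (rule order.trans[OF card_image_le]) (simp_all add: card_PiE finite_PiE)

lemma lin_indep_over_extend: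
  assumes K: "subfield K" and e: "lin_indep_over K e {..<k}" and v: "v \<notin> span_over K e k"
  shows "lin_indep_over K (e(k := v)) {..<Suc k}"
  unfolding lin_indep_over_def
proof (intro allI impI)
  fix c assume "(\<forall>i\<in>{..<Suc k}. c i \<in> K) \<and> (\<Sum>i\<in>{..<Suc k}. c i * (e(k := v)) i) = 0"
  then have cK: "\<forall>i\<in>{..<Suc k}. c i \<in> K" and sum0: "(\<Sum>i<k. c i * e i) + c k * v = 0"
    by (simp_all add: lessThan_Suc add.commute)
  have ck: "c k = 0"
  proof (rule ccontr)
    assume "c k \<noteq> 0"
    define d where "d = restrict (\<lambda>i. - inverse (c k) * c i) {..<k}"
    have "d \<in> PiE {..<k} (\<lambda>_. K)"
      using cK by (simp add: d_def subfield_mult subfield_uminus subfield_inverse K)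
    moreover have "v = - inverse (c k) * (\<Sum>i<k. c i * e i)"
      using sum0 \<open>c k \<noteq> 0\<close> by (simp add: eq_neg_iff_add_eq_0[symmetric] field_simps)
    then have "v = (\<Sum>i<k. d i * e i)"
      by (simp add: d_def sum_distrib_left mult.assoc)
    ultimately have "v \<in> span_over K e k" unfolding span_over_def by blast
    with v show False ..
  qed
  with sum0 have "(\<Sum>i<k. c i * e i) = 0" by simp
  with cK have "\<forall>i\<in>{..<k}. c i = 0"
    using e unfolding lin_indep_over_def by simp
  with ck show "\<forall>i\<in>{..<Suc k}. c i = 0" by (simp add: lessThan_Suc)
qed

lemma exists_lin_indep_over:
  fixes K :: "'a::field set"
  assumes fin: "finite (UNIV :: 'a set)" and K: "subfield K"
  shows "card K ^ k \<le> card (UNIV :: 'a set) \<Longrightarrow> \<exists>e. lin_indep_over K e {..<k}"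
proof (induction k)
  case 0
  show ?case by (simp add: lin_indep_over_def)
next
  case (Suc k)
  have "finite K" using fin by (rule finite_subset[rotated]) simp
  then have q: "2 \<le> card K" by (rule subfield_card_ge_2[OF K])
  then have "card K ^ k < card K ^ Suc k" by simp
  with Suc.prems have less: "card K ^ k < card (UNIV :: 'a set)" by linarith
  then obtain e where e: "lin_indep_over K e {..<k}" using Suc.IH less_imp_le by blast
  have "card (span_over K e k) < card (UNIV :: 'a set)"
    using card_span_over_le[OF \<open>finite K\<close>] less by (rule le_less_trans)
  then have "span_over K e k \<noteq> UNIV" by auto
  then obtain v where "v \<notin> span_over K e k" by blast
  from lin_indep_over_extend[OF K e this] show ?case by blast
qed

lemma alpha_le_power: "alpha q m u \<le> q ^ (m * u)"
proof -
  have "alpha q m u \<le> (\<Prod>i<u. q ^ m)" unfolding alpha_def by (rule prod_mono) auto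
  then show ?thesis by (simp add: power_mult)
qed

lemma power_le_alpha_diag:
  assumes q: "2 \<le> q"
  shows "q ^ (u * (u - 1)) \<le> alpha q u u"
proof -
  have "q ^ (u * (u - 1)) = (\<Prod>i<u. q ^ (u - 1))"
    unfolding prod_constant card_lessThan power_mult[symmetric] by (simp add: mult.commute)
  also have "\<dots> \<le> (\<Prod>i<u. q ^ u - q ^ i)"
  proof (rule prod_mono, safe)
    fix i assume i: "i < u"
    have "q ^ i \<le> q ^ (u - 1)" using i q by (intro power_increasing) auto
    moreover have "q ^ u = q * q ^ (u - 1)" using i by (simp flip: power_Suc)
    moreover have "2 * q ^ (u - 1) \<le> q * q ^ (u - 1)" using q by simp
    ultimately show "q ^ (u - 1) \<le> q ^ u - q ^ i" by linarith
  qed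
  finally show ?thesis unfolding alpha_def .
qed

lemma mult_Suc_diff_add_mult_pred:
  fixes u a :: nat
  assumes "u \<le> a"
  shows "u * (a + 1 - u) + u * (u - 1) = u * a"
proof (cases "u = 0")
  case False
  with assms have "(a + 1 - u) + (u - 1) = a" by simp
  then show ?thesis by (metis add_mult_distrib2)
qed simp

lemma gauss_binom_le_power:
  assumes q: "2 \<le> q" and "u \<le> n"
  shows "gauss_binom q n u \<le> q ^ (u * (n + 1 - u))"
proof -
  have split: "q ^ (n * u) = q ^ (u * (n + 1 - u)) * q ^ (u * (u - 1))"
    using mult_Suc_diff_add_mult_pred[OF assms(2)] by (metis power_add mult.commute)
  have "gauss_binom q n u \<le> alpha q n u div q ^ (u * (u - 1))"
    unfolding gauss_binom_def using q by (intro div_le_mono2 power_le_alpha_diag) simp_all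
  also have "\<dots> \<le> q ^ (n * u) div q ^ (u * (u - 1))"
    by (rule div_le_mono[OF alpha_le_power])
  also have "\<dots> = q ^ (u * (n + 1 - u))"
    unfolding split using q by simp
  finally show ?thesis .
qed

lemma ball_vol_le_sum_powers:
  assumes q: "2 \<le> q" and "r \<le> n" and "n \<le> m"
  shows "ball_vol q m n r \<le> (\<Sum>u\<le>r. q ^ (u * (2 * m + 1 - u)))"
  unfolding ball_vol_def
proof (rule sum_mono)
  fix u assume "u \<in> {..r}"
  with assms have u: "u \<le> n" by simp
  have "gauss_binom q n u * alpha q m u \<le> q ^ (u * (n + 1 - u)) * q ^ (m * u)"
    by (intro mult_le_mono gauss_binom_le_power alpha_le_power q u)
  also have "\<dots> = q ^ (u * (n + 1 - u + m))"
    by (simp add: power_add add_mult_distrib2 mult.commute)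
  also have "\<dots> \<le> q ^ (u * (2 * m + 1 - u))"
    using q u assms(3) by (intro power_increasing mult_le_mono2) simp_all
  finally show "gauss_binom q n u * alpha q m u \<le> q ^ (u * (2 * m + 1 - u))" .
qed

lemma sum_power_le_twice_last:
  fixes q :: nat
  assumes q: "2 \<le> q" and f: "\<And>u. u < r \<Longrightarrow> f u < f (Suc u)"
  shows "(\<Sum>u\<le>r. q ^ f u) \<le> 2 * q ^ f r"
  using f
proof (induction r)
  case (Suc r)
  have "(\<Sum>u\<le>Suc r. q ^ f u) \<le> 2 * q ^ f r + q ^ f (Suc r)"
    using Suc by simp
  also have "2 * q ^ f r \<le> q ^ f (Suc r)"
  proof -
    have "2 * q ^ f r \<le> q ^ Suc (f r)" using q by simp
    also have "\<dots> \<le> q ^ f (Suc r)" using q Suc.prems[of r] by (intro power_increasing) auto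
    finally show ?thesis .
  qed
  finally show ?case by simp
qed simp

lemma ball_vol_one_less:
  assumes q: "2 \<le> q" and "1 \<le> n" and "n \<le> m"
  shows "ball_vol q m n 1 < (q ^ m) ^ 2"
proof -
  have qn: "q ^ n \<le> q ^ m" and Q: "2 \<le> q ^ m"
    using assms order.trans[OF q self_le_power[of q m]] by (simp_all add: power_increasing)
  have "gauss_binom q n 1 \<le> q ^ m - 1"
    using qn by (simp add: gauss_binom_def alpha_def) (meson div_le_dividend diff_le_mono le_trans)
  then have "gauss_binom q n 1 * (q ^ m - 1) \<le> (q ^ m - 1) * (q ^ m - 1)"
    by (rule mult_le_mono1)
  moreover have "gauss_binom q n 0 = 1" by (simp add: gauss_binom_def alpha_def)
  ultimately have "ball_vol q m n 1 \<le> 1 + (q ^ m - 1) * (q ^ m - 1)"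
    by (simp add: ball_vol_def alpha_def atMost_Suc)
  also have "\<dots> < (q ^ m) ^ 2"
    using Q by (cases "q ^ m") (simp_all add: power2_eq_square)
  finally show ?thesis .
qed

lemma ball_vol_less:
  assumes q: "2 \<le> q" and "1 \<le> r" and "2 * r < n" and "n \<le> m"
  shows "ball_vol q m n r < (q ^ m) ^ (2 * r)"
proof (cases "r = 1")
  case True
  with assms ball_vol_one_less show ?thesis by simp
next
  case False
  with assms have r: "2 \<le> r" "r \<le> m" by simp_all
  have "ball_vol q m n r \<le> (\<Sum>u\<le>r. q ^ (u * (2 * m + 1 - u)))"
    using assms by (intro ball_vol_le_sum_powers) simp_all
  also have "\<dots> \<le> 2 * q ^ (r * (2 * m + 1 - r))"
  proof (rule sum_power_le_twice_last[OF q])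
    fix u assume "u < r"
    define b where "b = 2 * m - Suc u"
    with \<open>u < r\<close> r have "2 * m + 1 - u = Suc (Suc b)" "2 * m + 1 - Suc u = Suc b" "u < Suc b"
      by simp_all
    then show "u * (2 * m + 1 - u) < Suc u * (2 * m + 1 - Suc u)" by simp
  qed
  also have "\<dots> < q ^ 2 * q ^ (r * (2 * m + 1 - r))"
  proof (rule mult_strict_right_mono)
    show "2 < q ^ 2" using power_mono[OF q, of 2] by simp
  qed (use q in simp)
  also have "\<dots> \<le> (q ^ m) ^ (2 * r)"
  proof -
    have "2 * 1 \<le> r * (r - 1)" using r by (intro mult_le_mono) simp_all
    with mult_Suc_diff_add_mult_pred[of r "2 * m"] r
    have "2 + r * (2 * m + 1 - r) \<le> r * (2 * m)" by linarith
    also have "\<dots> = m * (2 * r)" by simp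
    finally have "2 + r * (2 * m + 1 - r) \<le> m * (2 * r)" .
    with q have "q ^ (2 + r * (2 * m + 1 - r)) \<le> q ^ (m * (2 * r))" by (intro power_increasing) simp_all
    then show ?thesis by (simp only: power_add power_mult)
  qed
  finally show ?thesis .
qed

theorem proposition1:
  fixes K :: "'a::field set" and q m n r :: nat
  assumes "finite (UNIV :: 'a set)"
    and "subfield K" and "card K = q"
    and "card (UNIV :: 'a set) = q ^ m"
    and "3 \<le> n" and "n \<le> m"
    and "2 \<le> 2 * r" and "2 * r < n"
  shows "\<exists>S. S \<subseteq> vecs n \<and> S \<noteq> {} \<and> rank_diameter K n S = 2 * r
             \<and> card S > ball_vol q m n r"
proof (intro exI conjI)
  have q: "2 \<le> q"
    using subfield_card_ge_2[OF assms(2) finite_subset[OF subset_UNIV assms(1)]] assms(3) by simp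
  have "card K ^ (2 * r) \<le> card (UNIV :: 'a set)"
    using q assms by (simp add: power_increasing)
  then obtain e where "lin_indep_over K e {..<2 * r}"
    using exists_lin_indep_over[OF assms(1,2)] by blast
  with assms show "rank_diameter K n (vecs (2 * r)) = 2 * r"
    by (intro rank_diameter_vecs) simp_all
  show "vecs (2 * r) \<subseteq> vecs n" using assms(8) by (simp add: vecs_mono)
  show "vecs (2 * r) \<noteq> {}" by (auto simp: vecs_def)
  show "ball_vol q m n r < card (vecs (2 * r) :: (nat \<Rightarrow> 'a) set)"
    using ball_vol_less[OF q] card_vecs[OF assms(1)] assms by simp
qed

end
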